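(* Let $H(D)$ be as defined below. Under a Reidemeister move on a knot diagram $D$: $H$ is unchanged by an RI move and by an unmatched RII move; $H$ increases by $1$ under a matched RII move that creates two crossings; and under an RIII move $H$ changes by $\pm1$, the change being equal to the change of Arnold's strangeness invariant $St$ of the underlying spherical curve $\widehat D$.
   Context: A knot diagram is a generic oriented immersed circle in $S^2$ with over/under information at each crossing; $\widehat D$ denotes its underlying immersed curve. An RII move is matched if the two strands involved are identically oriented, unmatched if oppositely oriented. For a crossing $a$, the smoothing $D^a$ is the two-component oriented link obtained by the orientation-preserving cut-and-paste at $a$ (first component: the one entering along the overcrossing arc and leaving along the undercrossing arc), and $lk$ is its linking number. With $\mathbb{G}_{\mathbb{Z}}$ the free abelian group on $\{X_n,Y_n\}_{n\in\mathbb{Z}}$, $I_{lk}(D)=\sum_{a\text{ positive}}X_{lk(D^a)}+\sum_{a\text{ negative}}Y_{lk(D^a)}$ (signs by the right-hand rule), and $h(X_n)=-n$, $h(Y_n)=n$ extended linearly, $H(D)=h(I_{lk}(D))$. $St$ is Arnold's strangeness invariant of generic immersed curves in $S^2$: it is unchanged under self-tangency moves and changes by $\pm1$ under triple point moves according to Arnold's sign convention for triple points. *)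

theory Defs
  imports Main
begin

text \<open>Knot diagrams are modelled combinatorially by signed Gauss words.
  A diagram is a pair (w, s): w is the cyclic Gauss word (a list, read up to
  rotation) recording, for each passage through a crossing, the crossing label
  and whether the strand passes over (True) or under (False); s gives the sign
  (+1 / -1, right-hand rule) of every crossing.\<close>

type_synonym 'c diagram = "('c \<times> bool) list \<times> ('c \<Rightarrow> int)"

definition crossings :: "'c diagram \<Rightarrow> 'c set" where
  "crossings D = fst ` set (fst D)"

definition knot_diagram :: "'c diagram \<Rightarrow> bool" where
  "knot_diagram D \<longleftrightarrow> distinct (fst D) \<and>
     (\<forall>c \<in> crossings D. (c, True) \<in> set (fst D) \<and> (c, False) \<in> set (fst D)
        \<and> snd D c \<in> {1, -1})"

text \<open>Smoothing at a crossing a: the two components, each given as the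
  sequence of crossing passages it contains.  Component 1 runs from the
  undercrossing passage of a to the overcrossing passage of a (so it enters a
  along the overcrossing arc and leaves along the undercrossing arc);
  component 2 is the rest.\<close>

definition smoothing :: "('c \<times> bool) list \<Rightarrow> 'c \<Rightarrow> ('c \<times> bool) list \<times> ('c \<times> bool) list" where
  "smoothing w a =
    (let r = tl (dropWhile (\<lambda>x. x \<noteq> (a, False)) w) @ takeWhile (\<lambda>x. x \<noteq> (a, False)) w
     in (takeWhile (\<lambda>x. x \<noteq> (a, True)) r, tl (dropWhile (\<lambda>x. x \<noteq> (a, True)) r)))"

definition link_lk :: "('c \<times> bool) list \<times> ('c \<times> bool) list \<Rightarrow> ('c \<Rightarrow> int) \<Rightarrow> int" where
  "link_lk L s = (\<Sum>b \<in> {b. (b, True) \<in> set (fst L) \<and> (b, False) \<in> set (snd L)}. s b)"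

definition lk_smooth :: "'c diagram \<Rightarrow> 'c \<Rightarrow> int" where
  "lk_smooth D a = link_lk (smoothing (fst D) a) (snd D)"

text \<open>The free abelian group G_Z on X_n, Y_n (n in Z), as finitely supported
  coefficient functions.\<close>

datatype gen = X int | Y int

type_synonym GZ = "gen \<Rightarrow> int"

definition I_lk :: "'c diagram \<Rightarrow> GZ" where
  "I_lk D = (\<lambda>g. (\<Sum>a \<in> crossings D.
      if snd D a = 1 then (if g = X (lk_smooth D a) then 1 else 0)
      else (if g = Y (lk_smooth D a) then 1 else 0)))"

fun hgen :: "gen \<Rightarrow> int" where
  "hgen (X n) = - n"
| "hgen (Y n) = n"

definition h :: "GZ \<Rightarrow> int" where
  "h f = (\<Sum>g \<in> {g. f g \<noteq> 0}. f g * hgen g)"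

definition H :: "'c diagram \<Rightarrow> int" where
  "H D = h (I_lk D)"

definition agree_on_old :: "'c diagram \<Rightarrow> 'c diagram \<Rightarrow> bool" where
  "agree_on_old D D' \<longleftrightarrow> (\<forall>x \<in> crossings D. snd D' x = snd D x)"

definition RI_move :: "'c diagram \<Rightarrow> 'c diagram \<Rightarrow> bool" where
  "RI_move D D' \<longleftrightarrow> (\<exists>m n c b. c \<notin> crossings D \<and>
      rotate n (fst D') = (c, b) # (c, \<not> b) # rotate m (fst D) \<and> agree_on_old D D')"

text \<open>Matched: the two strands are traversed in the same
  direction (both meet c before d); unmatched: opposite directions.\<close>
definition RII_matched_move :: "'c diagram \<Rightarrow> 'c diagram \<Rightarrow> bool" where
  "RII_matched_move D D' \<longleftrightarrow> (\<exists>m n c d u v. c \<noteq> d \<and> c \<notin> crossings D \<and> d \<notin> crossings D \<and>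
      rotate m (fst D) = u @ v \<and>
      rotate n (fst D') = (c, True) # (d, True) # u @ [(c, False), (d, False)] @ v \<and>
      snd D' d = - snd D' c \<and> agree_on_old D D')"

definition RII_unmatched_move :: "'c diagram \<Rightarrow> 'c diagram \<Rightarrow> bool" where
  "RII_unmatched_move D D' \<longleftrightarrow> (\<exists>m n c d u v. c \<noteq> d \<and> c \<notin> crossings D \<and> d \<notin> crossings D \<and>
      rotate m (fst D) = u @ v \<and>
      rotate n (fst D') = (c, True) # (d, True) # u @ [(d, False), (c, False)] @ v \<and>
      snd D' d = - snd D' c \<and> agree_on_old D D')"

text \<open>Strands 1,2,3 are the three branches through the vanishing
  triangle, numbered in the cyclic order in which the curve visits them;
  a = crossing of strands 1,2, b = of 2,3, c = of 3,1; h1,h2,h3 are the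
  (distinct) heights, the higher strand passing over.  The flag f_k is True
  iff strand k meets its crossing with strand k-1 before its crossing with
  strand k+1 (indices mod 3), i.e. iff, in the triangle of the diagram, side
  k is directed along the orientation of the triangle given by the cyclic
  order 1,2,3.  The move reverses the order on every strand.  The sign
  condition (with global orientation mu) is exactly the condition that the
  crossing signs come from three oriented lines in the plane bounding a
  triangle with these orders.\<close>

definition dlt :: "bool \<Rightarrow> int" where
  "dlt f = (if f then 1 else -1)"

definition psgn :: "nat \<Rightarrow> nat \<Rightarrow> int" where
  "psgn hi hj = (if hi > hj then 1 else -1)"

definition P1 :: "'c \<Rightarrow> 'c \<Rightarrow> 'c \<Rightarrow> nat \<Rightarrow> nat \<Rightarrow> nat \<Rightarrow> bool \<Rightarrow> ('c \<times> bool) list" where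
  "P1 a b c h1 h2 h3 f = (if f then [(c, h1 > h3), (a, h1 > h2)] else [(a, h1 > h2), (c, h1 > h3)])"

definition P2 :: "'c \<Rightarrow> 'c \<Rightarrow> 'c \<Rightarrow> nat \<Rightarrow> nat \<Rightarrow> nat \<Rightarrow> bool \<Rightarrow> ('c \<times> bool) list" where
  "P2 a b c h1 h2 h3 f = (if f then [(a, h2 > h1), (b, h2 > h3)] else [(b, h2 > h3), (a, h2 > h1)])"

definition P3 :: "'c \<Rightarrow> 'c \<Rightarrow> 'c \<Rightarrow> nat \<Rightarrow> nat \<Rightarrow> nat \<Rightarrow> bool \<Rightarrow> ('c \<times> bool) list" where
  "P3 a b c h1 h2 h3 f = (if f then [(b, h3 > h2), (c, h3 > h1)] else [(c, h3 > h1), (b, h3 > h2)])"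

text \<open>RIII_move D D' q: D' arises from D by an RIII move, and q is Arnold's
  number for the newborn vanishing triangle (the triangle of D'): the number
  of its sides whose direction agrees with the orientation of the triangle
  given by the cyclic order of the sides along the curve.\<close>
definition RIII_move :: "'c diagram \<Rightarrow> 'c diagram \<Rightarrow> nat \<Rightarrow> bool" where
  "RIII_move D D' q \<longleftrightarrow> (\<exists>m n a b c h1 h2 h3 f1 f2 f3 A B C mu.
      distinct [a, b, c] \<and> distinct [h1, h2, h3] \<and>
      rotate m (fst D) = P1 a b c h1 h2 h3 f1 @ A @ P2 a b c h1 h2 h3 f2 @ B @ P3 a b c h1 h2 h3 f3 @ C \<and>
      rotate n (fst D') = P1 a b c h1 h2 h3 (\<not> f1) @ A @ P2 a b c h1 h2 h3 (\<not> f2) @ B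
                           @ P3 a b c h1 h2 h3 (\<not> f3) @ C \<and>
      mu \<in> {1, -1} \<and>
      snd D a = mu * dlt f1 * dlt f2 * psgn h1 h2 \<and>
      snd D b = mu * dlt f2 * dlt f3 * psgn h2 h3 \<and>
      snd D c = mu * dlt f3 * dlt f1 * psgn h3 h1 \<and>
      agree_on_old D D' \<and>
      q = card {k \<in> {1::nat, 2, 3}. \<not> [f1, f2, f3] ! (k - 1)})"

text \<open>Change of Arnold's strangeness St under a triple point move: +1 if the
  newborn vanishing triangle is positive, i.e. its sign (-1)^q is +1, and -1
  otherwise (Arnold's convention).\<close>
definition St_change :: "nat \<Rightarrow> int" where
  "St_change q = (-1) ^ q"

end

theory Submission
  imports Defs
begin

text \<open>
  Writing s(a) for the sign of a crossing and lk(a) for the linking number of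
  the smoothing at a, the definitions give H(D) = - (sum over all crossings a of s(a) lk(a)).
  A Reidemeister move changes only a few crossings, and every other crossing keeps its
  linking number: the moved strands form short blocks of the cyclic Gauss word which either
  lie entirely on one of the two smoothed components or (RIII) are only reordered.  Hence
  the change of H is a local sum over the created crossings (RI, RII), resp. over the three
  crossings of the vanishing triangle (RIII).  For RIII, erasing all other passages shows
  that only the linking inside the triangle changes, and this is a finite computation on
  the six-letter Gauss word of the triangle.
\<close>

section \<open>H as a signed sum of linking numbers\<close>

lemma finite_crossings: "finite (crossings D)"
  by (simp add: crossings_def)

text \<open>Each crossing contributes h(X n) = -n or h(Y n) = n, i.e. minus its sign times its
  linking number.\<close>
lemma H_signed_sum:
  assumes signs: "\<forall>a\<in>crossings D. snd D a \<in> {1, -1}"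
  shows "H D = - (\<Sum>a\<in>crossings D. snd D a * lk_smooth D a)"
proof -
  define Cr where "Cr = crossings D"
  define G where "G a = (if snd D a = 1 then X (lk_smooth D a) else Y (lk_smooth D a))" for a
  have fin: "finite Cr" by (simp add: Cr_def finite_crossings)
  have I: "I_lk D g = (\<Sum>a\<in>Cr. if G a = g then 1 else 0)" for g
    unfolding I_lk_def Cr_def G_def by (rule sum.cong) auto
  have supp: "{g. I_lk D g \<noteq> 0} = G ` Cr"
  proof -
    have "I_lk D g \<noteq> 0 \<longleftrightarrow> g \<in> G ` Cr" for g
      unfolding I using fin by (subst sum_nonneg_eq_0_iff) auto
    then show ?thesis by auto
  qed
  have one_mult: "(if P then 1 else 0) * i = (if P then i else 0)" for P and i :: int
    by simp
  have "H D = (\<Sum>g\<in>G ` Cr. (\<Sum>a\<in>Cr. if G a = g then 1 else 0) * hgen g)"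
    unfolding H_def h_def supp by (simp add: I)
  also have "\<dots> = (\<Sum>g\<in>G ` Cr. \<Sum>a\<in>Cr. if G a = g then hgen g else 0)"
    by (simp add: sum_distrib_right one_mult)
  also have "\<dots> = (\<Sum>a\<in>Cr. \<Sum>g\<in>G ` Cr. if G a = g then hgen g else 0)"
    by (rule sum.swap)
  also have "\<dots> = (\<Sum>a\<in>Cr. hgen (G a))"
    using fin by (intro sum.cong refl) (simp add: sum.delta)
  also have "\<dots> = (\<Sum>a\<in>Cr. - (snd D a * lk_smooth D a))"
    using signs unfolding Cr_def G_def by (intro sum.cong refl) auto
  finally show ?thesis by (simp add: Cr_def sum_negf)
qed

lemma knot_diagram_signs: "knot_diagram D \<Longrightarrow> \<forall>a\<in>crossings D. snd D a \<in> {1, -1}"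
  by (auto simp: knot_diagram_def)

lemma H_change:
  assumes kd: "knot_diagram D" and kd': "knot_diagram D'"
    and old: "crossings D \<subseteq> crossings D'" and ag: "agree_on_old D D'"
    and M: "M \<subseteq> crossings D"
    and fixed: "\<And>x. x \<in> crossings D - M \<Longrightarrow> lk_smooth D' x = lk_smooth D x"
  shows "H D' - H D = - (\<Sum>y\<in>crossings D' - crossings D. snd D' y * lk_smooth D' y)
                     - (\<Sum>y\<in>M. snd D y * (lk_smooth D' y - lk_smooth D y))"
proof -
  define \<delta> where "\<delta> y = snd D y * (lk_smooth D' y - lk_smooth D y)" for y
  have "(\<Sum>y\<in>crossings D'. snd D' y * lk_smooth D' y)
      = (\<Sum>y\<in>crossings D' - crossings D. snd D' y * lk_smooth D' y)
        + (\<Sum>y\<in>crossings D. snd D' y * lk_smooth D' y)"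
    using old finite_crossings by (rule sum.subset_diff)
  also have "(\<Sum>y\<in>crossings D. snd D' y * lk_smooth D' y)
      = (\<Sum>y\<in>crossings D. snd D y * lk_smooth D y) + (\<Sum>y\<in>crossings D. \<delta> y)"
    using ag unfolding sum.distrib[symmetric] \<delta>_def agree_on_old_def
    by (intro sum.cong) (auto simp: algebra_simps)
  also have "(\<Sum>y\<in>crossings D. \<delta> y) = (\<Sum>y\<in>M. \<delta> y)"
    using M fixed finite_crossings[of D] by (intro sum.mono_neutral_right) (auto simp: \<delta>_def)
  finally show ?thesis
    using H_signed_sum[OF knot_diagram_signs[OF kd]] H_signed_sum[OF knot_diagram_signs[OF kd']]
    by (simp add: \<delta>_def)
qed

section \<open>Linking numbers of sets of passages\<close>

text \<open>The linking number of two components only depends on their sets of passages: it is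
  the sum of the signs of the crossings passing over from S to T.\<close>
definition arc_lk :: "('c \<times> bool) set \<Rightarrow> ('c \<times> bool) set \<Rightarrow> ('c \<Rightarrow> int) \<Rightarrow> int" where
  "arc_lk S T s = (\<Sum>b\<in>{b. (b, True) \<in> S \<and> (b, False) \<in> T}. s b)"

lemma link_lk_arc_lk: "link_lk L s = arc_lk (set (fst L)) (set (snd L)) s"
  by (simp add: link_lk_def arc_lk_def)

lemma arc_lk_empty: "arc_lk {} T s = 0" "arc_lk S {} s = 0"
  by (simp_all add: arc_lk_def)

lemma arc_lk_signs:
  assumes "\<And>y. (y, True) \<in> S \<Longrightarrow> s' y = s y"
  shows "arc_lk S T s' = arc_lk S T s"
  unfolding arc_lk_def using assms by (intro sum.cong) auto

lemma arc_lk_union: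
  assumes fin: "finite S" "finite A"
    and outside: "\<forall>p\<in>S \<union> T. fst p \<notin> K" and inside: "\<forall>p\<in>A \<union> B. fst p \<in> K"
  shows "arc_lk (S \<union> A) (T \<union> B) s = arc_lk S T s + arc_lk A B s"
proof -
  let ?I = "\<lambda>S T. {b. (b, True) \<in> S \<and> (b, False) \<in> T}"
  have out: "b \<notin> K" if "(b, t) \<in> S \<union> T" for b t using outside that by force
  have ins: "b \<in> K" if "(b, t) \<in> A \<union> B" for b t using inside that by force
  have split: "?I (S \<union> A) (T \<union> B) = ?I S T \<union> ?I A B"
    using out ins by blast
  have "?I S T \<subseteq> fst ` S" "?I A B \<subseteq> fst ` A" by force+
  then have "finite (?I S T)" "finite (?I A B)" using fin finite_subset by blast+
  moreover have "?I S T \<inter> ?I A B = {}" using out ins by blast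
  ultimately show ?thesis unfolding arc_lk_def split by (rule sum.union_disjoint)
qed

lemma arc_lk_union_oriented:
  assumes fin: "finite Out" "finite In" "finite Eo" "finite Ei"
    and outside: "\<forall>p\<in>Out \<union> In. fst p \<notin> K" and inside: "\<forall>p\<in>Eo \<union> Ei. fst p \<in> K"
  shows "arc_lk (if ov then Out \<union> Eo else In \<union> Ei) (if ov then In \<union> Ei else Out \<union> Eo) s
       = arc_lk (if ov then Out else In) (if ov then In else Out) s
         + arc_lk (if ov then Eo else Ei) (if ov then Ei else Eo) s"
proof (cases ov)
  case True
  then show ?thesis using arc_lk_union[of Out Eo In K Ei] fin outside inside by simp
next
  case False
  have "\<forall>p\<in>In \<union> Out. fst p \<notin> K" "\<forall>p\<in>Ei \<union> Eo. fst p \<in> K" using outside inside by blast+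
  then show ?thesis using False arc_lk_union[of In Ei Out K Eo] fin by simp
qed

lemma arc_lk_within:
  assumes "finite K" "\<forall>p \<in> S \<union> T. fst p \<in> K"
  shows "arc_lk S T s = (\<Sum>z\<in>K. if (z, True) \<in> S \<and> (z, False) \<in> T then s z else 0)"
proof -
  have "{b. (b, True) \<in> S \<and> (b, False) \<in> T} = {z\<in>K. (z, True) \<in> S \<and> (z, False) \<in> T}"
    using assms(2) by force
  then show ?thesis unfolding arc_lk_def using assms(1) by (simp add: sum.inter_filter)
qed

section \<open>Smoothing by cutting the Gauss word\<close>

definition from_under :: "('c \<times> bool) list \<Rightarrow> 'c \<Rightarrow> ('c \<times> bool) list" where
  "from_under w a = tl (dropWhile (\<lambda>x. x \<noteq> (a, False)) w) @ takeWhile (\<lambda>x. x \<noteq> (a, False)) w"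

lemma smoothing_from_under:
  "smoothing w a = (takeWhile (\<lambda>x. x \<noteq> (a, True)) (from_under w a),
                    tl (dropWhile (\<lambda>x. x \<noteq> (a, True)) (from_under w a)))"
  by (simp add: smoothing_def from_under_def Let_def)

lemma from_under_rotate1:
  assumes "distinct w" "(a, False) \<in> set w"
  shows "from_under (rotate1 w) a = from_under w a"
proof (cases w)
  case Nil
  then show ?thesis by simp
next
  case (Cons x w')
  show ?thesis
  proof (cases "x = (a, False)")
    case True
    with assms Cons have "(a, False) \<notin> set w'" by auto
    then have "dropWhile (\<lambda>x. x \<noteq> (a, False)) w' = []" "takeWhile (\<lambda>x. x \<noteq> (a, False)) w' = w'"
      by (auto simp: dropWhile_eq_Nil_conv takeWhile_eq_all_conv)
    then show ?thesis using Cons True by (simp add: from_under_def dropWhile_append takeWhile_append)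
  next
    case False
    with assms Cons have m: "(a, False) \<in> set w'" by auto
    then have "dropWhile (\<lambda>x. x \<noteq> (a, False)) w' \<noteq> []" by (auto simp: dropWhile_eq_Nil_conv)
    then show ?thesis using Cons False m by (auto simp: from_under_def dropWhile_append takeWhile_append)
  qed
qed

lemma smoothing_rotate:
  assumes "distinct w" "(a, False) \<in> set w"
  shows "smoothing (rotate n w) a = smoothing w a"
proof -
  have "from_under (rotate n w) a = from_under w a"
  proof (induction n)
    case (Suc n)
    have "from_under (rotate1 (rotate n w)) a = from_under (rotate n w) a"
      using assms by (intro from_under_rotate1) auto
    with Suc show ?case by simp
  qed simp
  then show ?thesis by (simp add: smoothing_from_under)
qed

lemma smoothing_from_under_passage:
  assumes "distinct ((a, False) # Xs @ (a, True) # Ys)"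
  shows "smoothing ((a, False) # Xs @ (a, True) # Ys) a = (Xs, Ys)"
proof -
  have "from_under ((a, False) # Xs @ (a, True) # Ys) a = Xs @ (a, True) # Ys"
    by (simp add: from_under_def)
  moreover have "(a, True) \<notin> set Xs" using assms by auto
  ultimately show ?thesis
    by (simp add: smoothing_from_under takeWhile_append dropWhile_append takeWhile_eq_all_conv
        dropWhile_eq_Nil_conv)
qed

lemma smoothing_cut:
  assumes d: "distinct (U @ (a, ov) # Xs @ (a, \<not> ov) # V)"
  shows "smoothing (U @ (a, ov) # Xs @ (a, \<not> ov) # V) a = (if ov then (V @ U, Xs) else (Xs, V @ U))"
    (is "smoothing ?L a = _")
proof -
  have under: "(a, False) \<in> set ?L" by (cases ov) auto
  show ?thesis
  proof (cases ov)
    case False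
    then have "rotate (length U) ?L = (a, False) # Xs @ (a, True) # V @ U"
      by (simp add: rotate_append)
    moreover have "distinct ((a, False) # Xs @ (a, True) # V @ U)" using d False by auto
    ultimately show ?thesis
      using smoothing_rotate[OF d under, of "length U"] smoothing_from_under_passage False by metis
  next
    case True
    then have "?L = (U @ (a, True) # Xs) @ ((a, False) # V)" by simp
    then have "rotate (length (U @ (a, True) # Xs)) ?L = (a, False) # V @ U @ (a, True) # Xs"
      by (metis rotate_append append_Cons append_assoc)
    moreover have "distinct ((a, False) # V @ U @ (a, True) # Xs)" using d True by auto
    ultimately show ?thesis
      using smoothing_rotate[OF d under, of "length (U @ (a, True) # Xs)"]
        smoothing_from_under_passage[of a "V @ U" Xs] True
      by (metis append_assoc)
  qed
qed

lemma cut_exists: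
  assumes "(a, False) \<in> set L" "(a, True) \<in> set L"
  shows "\<exists>U ov Xs V. L = U @ (a, ov) # Xs @ (a, \<not> ov) # V"
proof -
  obtain p q where L: "L = p @ (a, False) # q" using assms(1) by (meson split_list)
  show ?thesis
  proof (cases "(a, True) \<in> set q")
    case True
    then obtain q1 q2 where "q = q1 @ (a, True) # q2" by (meson split_list)
    then show ?thesis using L by (metis (full_types))
  next
    case False
    then have "(a, True) \<in> set p" using assms(2) L by auto
    then obtain p1 p2 where "p = p1 @ (a, True) # p2" by (meson split_list)
    then have "L = p1 @ (a, True) # p2 @ (a, \<not> True) # q" using L by simp
    then show ?thesis by blast
  qed
qed

lemma lk_smooth_cut:
  assumes d: "distinct (fst D)" and r: "rotate n (fst D) = U @ (a, ov) # Xs @ (a, \<not> ov) # V"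
  shows "lk_smooth D a = arc_lk (if ov then set V \<union> set U else set Xs)
                                (if ov then set Xs else set V \<union> set U) (snd D)"
proof -
  have dL: "distinct (U @ (a, ov) # Xs @ (a, \<not> ov) # V)" using d r by (metis distinct_rotate)
  have "(a, False) \<in> set (rotate n (fst D))" using r by (cases ov) auto
  then have "(a, False) \<in> set (fst D)" by simp
  then have "smoothing (fst D) a = smoothing (U @ (a, ov) # Xs @ (a, \<not> ov) # V) a"
    using smoothing_rotate[OF d] r by metis
  then show ?thesis
    using smoothing_cut[OF dL] by (simp add: lk_smooth_def link_lk_arc_lk Un_commute)
qed

section \<open>Blocks of the Gauss word\<close>

lemma append_split_cases:
  assumes "A @ m # B = P @ Q @ R" "m \<notin> set Q"
  shows "(\<exists>W. A = P @ Q @ W \<and> R = W @ m # B) \<or> (\<exists>W. P = A @ m # W \<and> B = W @ Q @ R)"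
  using assms
proof (induction A arbitrary: P Q)
  case Nil
  then show ?case by (cases P; cases Q) auto
next
  case (Cons a A')
  show ?case
  proof (cases P)
    case (Cons p P')
    with Cons.prems have "A' @ m # B = P' @ Q @ R" by simp
    from Cons.IH[OF this Cons.prems(2)] Cons.prems \<open>P = p # P'\<close> show ?thesis by auto
  next
    case Nil
    show ?thesis
    proof (cases Q)
      case Nil
      with \<open>P = []\<close> Cons.prems show ?thesis by auto
    next
      case (Cons q Q')
      with \<open>P = []\<close> Cons.prems have e: "A' @ m # B = [] @ Q' @ R" "q = a" by auto
      have "m \<notin> set Q'" using Cons Cons.prems by auto
      from Cons.IH[OF e(1) this] show ?thesis using \<open>P = []\<close> Cons e by auto
    qed
  qed
qed

lemma block_position:
  assumes "U @ (x, ov) # Xs @ (x, \<not> ov) # V = P @ Q @ R" "\<forall>b. (x, b) \<notin> set Q"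
  shows "(\<exists>W. U = P @ Q @ W \<and> R = W @ (x, ov) # Xs @ (x, \<not> ov) # V)
       \<or> (\<exists>W1 W2. Xs = W1 @ Q @ W2 \<and> P = U @ (x, ov) # W1 \<and> R = W2 @ (x, \<not> ov) # V)
       \<or> (\<exists>W. P = U @ (x, ov) # Xs @ (x, \<not> ov) # W \<and> V = W @ Q @ R)"
proof -
  have nm: "(x, b) \<notin> set Q" for b using assms(2) by blast
  from append_split_cases[OF assms(1) nm] show ?thesis
  proof
    assume "\<exists>W. P = U @ (x, ov) # W \<and> Xs @ (x, \<not> ov) # V = W @ Q @ R"
    then obtain W where W: "P = U @ (x, ov) # W" "Xs @ (x, \<not> ov) # V = W @ Q @ R" by blast
    from append_split_cases[OF W(2) nm] W(1) show ?thesis by auto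
  qed auto
qed

lemma block_replace:
  assumes cut: "P @ Q @ R = U @ (x, ov) # Xs @ (x, \<not> ov) # V"
    and x: "\<forall>b. (x, b) \<notin> set Q"
  shows "\<exists>U' Xs' V' Out In out. P @ Q' @ R = U' @ (x, ov) # Xs' @ (x, \<not> ov) # V'
     \<and> set V \<union> set U = Out \<union> (if out then set Q else {}) \<and> set Xs = In \<union> (if out then {} else set Q)
     \<and> set V' \<union> set U' = Out \<union> (if out then set Q' else {}) \<and> set Xs' = In \<union> (if out then {} else set Q')"
  using block_position[OF cut[symmetric] x]
proof (elim disjE exE conjE)
  fix W assume "U = P @ Q @ W" "R = W @ (x, ov) # Xs @ (x, \<not> ov) # V"
  then show ?thesis
    by (intro exI[of _ "P @ Q' @ W"] exI[of _ Xs] exI[of _ V] exI[of _ "set V \<union> set P \<union> set W"]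
        exI[of _ "set Xs"] exI[of _ True]) auto
next
  fix W1 W2 assume "Xs = W1 @ Q @ W2" "P = U @ (x, ov) # W1" "R = W2 @ (x, \<not> ov) # V"
  then show ?thesis
    by (intro exI[of _ U] exI[of _ "W1 @ Q' @ W2"] exI[of _ V] exI[of _ "set V \<union> set U"]
        exI[of _ "set W1 \<union> set W2"] exI[of _ False]) auto
next
  fix W assume "P = U @ (x, ov) # Xs @ (x, \<not> ov) # W" "V = W @ Q @ R"
  then show ?thesis
    by (intro exI[of _ U] exI[of _ Xs] exI[of _ "W @ Q' @ R"] exI[of _ "set W \<union> set R \<union> set U"]
        exI[of _ "set Xs"] exI[of _ True]) auto
qed

lemma block_insert:
  assumes "P @ R = U @ (x, ov) # Xs @ (x, \<not> ov) # V"
  shows "\<exists>U' Xs' V' out. P @ E @ R = U' @ (x, ov) # Xs' @ (x, \<not> ov) # V'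
     \<and> set V' \<union> set U' = set V \<union> set U \<union> (if out then set E else {})
     \<and> set Xs' = set Xs \<union> (if out then {} else set E)"
proof -
  obtain U' Xs' V' Out In out where
    "P @ E @ R = U' @ (x, ov) # Xs' @ (x, \<not> ov) # V'"
    "set V \<union> set U = Out \<union> (if out then set [] else {})" "set Xs = In \<union> (if out then {} else set [])"
    "set V' \<union> set U' = Out \<union> (if out then set E else {})" "set Xs' = In \<union> (if out then {} else set E)"
    using block_replace[of P "[]" R U x ov Xs V E, unfolded append_Nil, OF assms] by simp blast
  then show ?thesis
    by (intro exI[of _ U'] exI[of _ Xs'] exI[of _ V'] exI[of _ out]) (cases out; simp)
qed

lemma block_permute:
  assumes "P @ Q @ R = U @ (x, ov) # Xs @ (x, \<not> ov) # V" "\<forall>b. (x, b) \<notin> set Q" "set Q' = set Q"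
  shows "\<exists>U' Xs' V'. P @ Q' @ R = U' @ (x, ov) # Xs' @ (x, \<not> ov) # V'
     \<and> set V' \<union> set U' = set V \<union> set U \<and> set Xs' = set Xs"
proof -
  obtain U' Xs' V' Out In out where "P @ Q' @ R = U' @ (x, ov) # Xs' @ (x, \<not> ov) # V'"
    "set V \<union> set U = Out \<union> (if out then set Q else {})" "set Xs = In \<union> (if out then {} else set Q)"
    "set V' \<union> set U' = Out \<union> (if out then set Q' else {})" "set Xs' = In \<union> (if out then {} else set Q')"
    using block_replace[OF assms(1,2), of Q'] by blast
  then show ?thesis using assms(3)
    by (intro exI[of _ U'] exI[of _ Xs'] exI[of _ V']) (cases out; simp)
qed

section \<open>Moves inserting new crossings: RI and RII\<close>

lemma crossings_rotate: "crossings D = fst ` set (rotate n (fst D))"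
  by (simp add: crossings_def)

lemma knot_diagram_passages:
  "knot_diagram D \<Longrightarrow> x \<in> crossings D \<Longrightarrow> (x, True) \<in> set (fst D) \<and> (x, False) \<in> set (fst D)"
  by (auto simp: knot_diagram_def)

lemma cut_insert_blocks:
  assumes cut: "u @ v = U @ (x, ov) # Xs @ (x, \<not> ov) # V"
  obtains U' Xs' V' Eo Ei where "E1 @ u @ E2 @ v = U' @ (x, ov) # Xs' @ (x, \<not> ov) # V'"
    "set V' \<union> set U' = set V \<union> set U \<union> Eo" "set Xs' = set Xs \<union> Ei"
    "(Eo, Ei) \<in> {(set E1 \<union> set E2, {}), (set E1, set E2), (set E2, set E1), ({}, set E1 \<union> set E2)}"
proof -
  obtain U1 Xs1 V1 o1 where cut1: "u @ E2 @ v = U1 @ (x, ov) # Xs1 @ (x, \<not> ov) # V1"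
    and out1: "set V1 \<union> set U1 = set V \<union> set U \<union> (if o1 then set E2 else {})"
    and in1: "set Xs1 = set Xs \<union> (if o1 then {} else set E2)"
    using block_insert[OF cut] by blast
  obtain U2 Xs2 V2 o2 where cut2: "E1 @ u @ E2 @ v = U2 @ (x, ov) # Xs2 @ (x, \<not> ov) # V2"
    and out2: "set V2 \<union> set U2 = set V1 \<union> set U1 \<union> (if o2 then set E1 else {})"
    and in2: "set Xs2 = set Xs1 \<union> (if o2 then {} else set E1)"
    using block_insert[of "[]" "u @ E2 @ v", unfolded append_Nil, OF cut1, of E1] by blast
  define Eo where "Eo = (if o1 then set E2 else {}) \<union> (if o2 then set E1 else {})"
  define Ei where "Ei = (if o1 then {} else set E2) \<union> (if o2 then {} else set E1)"
  have outer: "set V2 \<union> set U2 = set V \<union> set U \<union> Eo" and inner: "set Xs2 = set Xs \<union> Ei"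
    using out1 out2 in1 in2 by (auto simp: Eo_def Ei_def)
  have sides: "(Eo, Ei) \<in> {(set E1 \<union> set E2, {}), (set E1, set E2), (set E2, set E1), ({}, set E1 \<union> set E2)}"
    by (cases o1; cases o2; simp add: Eo_def Ei_def Un_commute)
  show thesis by (rule that[OF cut2 outer inner sides])
qed

text \<open>An old crossing x under the insertion of two blocks E1, E2 of passages of new crossings
  (E2 may be empty): each block lies wholly on one component of the smoothing at x, so the
  linking number changes by the linking of the new passages on the first component with
  those on the second.\<close>
lemma lk_smooth_insert_blocks:
  assumes dD: "distinct (fst D)" and dD': "distinct (fst D')"
    and w: "rotate m (fst D) = u @ v" and w': "rotate n (fst D') = E1 @ u @ E2 @ v"
    and new: "\<forall>p \<in> set E1 \<union> set E2. fst p \<notin> fst ` set (u @ v)"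
    and signs: "\<forall>y \<in> fst ` set (u @ v). snd D' y = snd D y"
    and x: "(x, True) \<in> set (u @ v)" "(x, False) \<in> set (u @ v)"
  shows "\<exists>A B. lk_smooth D' x = lk_smooth D x + arc_lk A B (snd D')
     \<and> (A, B) \<in> {(set E1 \<union> set E2, {}), (set E1, set E2), (set E2, set E1), ({}, set E1 \<union> set E2)}"
proof -
  obtain U ov Xs V where cut: "u @ v = U @ (x, ov) # Xs @ (x, \<not> ov) # V"
    using cut_exists[of x "u @ v"] x by blast
  let ?O = "set V \<union> set U" and ?I = "set Xs" and ?K = "fst ` (set E1 \<union> set E2)"
  obtain U' Xs' V' Eo Ei where cut': "E1 @ u @ E2 @ v = U' @ (x, ov) # Xs' @ (x, \<not> ov) # V'"
    and O': "set V' \<union> set U' = ?O \<union> Eo" and I': "set Xs' = ?I \<union> Ei"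
    and EoEi: "(Eo, Ei) \<in> {(set E1 \<union> set E2, {}), (set E1, set E2), (set E2, set E1), ({}, set E1 \<union> set E2)}"
    by (rule cut_insert_blocks[OF cut])
  have old_labels: "\<forall>p\<in>?O \<union> ?I. fst p \<notin> ?K"
  proof (intro ballI notI)
    fix p assume p: "p \<in> ?O \<union> ?I" "fst p \<in> ?K"
    from p(2) obtain q where q: "fst p = fst q" "q \<in> set E1 \<union> set E2" by (rule imageE)
    have "fst p \<in> fst ` set (u @ v)" using p(1) cut by auto
    then show False using new[rule_format, OF q(2)] q(1) by simp
  qed
  have new_labels: "\<forall>p\<in>Eo \<union> Ei. fst p \<in> ?K" and fin: "finite Eo" "finite Ei"
    using EoEi by (auto elim!: insertE)
  have old_signs: "snd D' y = snd D y" if "(y, True) \<in> ?O \<union> ?I" for y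
  proof -
    have "(y, True) \<in> set (u @ v)" using that cut by auto
    then have "y \<in> fst ` set (u @ v)" by (rule rev_image_eqI) simp
    then show ?thesis using signs by blast
  qed
  have "lk_smooth D' x = arc_lk (if ov then ?O \<union> Eo else ?I \<union> Ei) (if ov then ?I \<union> Ei else ?O \<union> Eo) (snd D')"
    using lk_smooth_cut[OF dD' w'[unfolded cut']] O' I' by simp
  also have "\<dots> = arc_lk (if ov then ?O else ?I) (if ov then ?I else ?O) (snd D')
                  + arc_lk (if ov then Eo else Ei) (if ov then Ei else Eo) (snd D')"
    using old_labels new_labels fin by (intro arc_lk_union_oriented) simp_all
  also have "arc_lk (if ov then ?O else ?I) (if ov then ?I else ?O) (snd D') = lk_smooth D x"
    unfolding lk_smooth_cut[OF dD w[unfolded cut]]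
    by (rule arc_lk_signs) (use old_signs in \<open>auto split: if_splits\<close>)
  finally have "lk_smooth D' x = lk_smooth D x + arc_lk (if ov then Eo else Ei) (if ov then Ei else Eo) (snd D')" .
  moreover have "(if ov then Eo else Ei, if ov then Ei else Eo)
      \<in> {(set E1 \<union> set E2, {}), (set E1, set E2), (set E2, set E1), ({}, set E1 \<union> set E2)}"
    using EoEi by (cases ov) auto
  ultimately show ?thesis by blast
qed

lemma RI_case:
  assumes kd: "knot_diagram D" and kd': "knot_diagram D'" and mv: "RI_move D D'"
  shows "H D' = H D"
proof -
  obtain m n c b where c: "c \<notin> crossings D" and ag: "agree_on_old D D'"
    and w': "rotate n (fst D') = (c, b) # (c, \<not> b) # rotate m (fst D)"
    using mv unfolding RI_move_def by blast
  let ?w = "rotate m (fst D)"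
  have dD: "distinct (fst D)" and dD': "distinct (fst D')" using kd kd' by (auto simp: knot_diagram_def)
  have cr: "crossings D' = insert c (crossings D)"
    using crossings_rotate[of D' n] crossings_rotate[of D m] w' by auto
  have fixed: "lk_smooth D' x = lk_smooth D x" if x: "x \<in> crossings D" for x
  proof -
    have w0: "rotate m (fst D) = [] @ ?w" by simp
    have w0': "rotate n (fst D') = [(c, b), (c, \<not> b)] @ [] @ [] @ ?w" using w' by simp
    have pass: "(x, True) \<in> set ([] @ ?w)" "(x, False) \<in> set ([] @ ?w)"
      using knot_diagram_passages[OF kd x] by simp_all
    have "\<forall>p \<in> set [(c, b), (c, \<not> b)] \<union> set []. fst p \<notin> fst ` set ([] @ ?w)"
      using c by (auto simp: crossings_def)
    moreover have "\<forall>y \<in> fst ` set ([] @ ?w). snd D' y = snd D y"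
      using ag by (auto simp: agree_on_old_def crossings_def)
    ultimately obtain A B where lk: "lk_smooth D' x = lk_smooth D x + arc_lk A B (snd D')"
      and AB: "(A, B) \<in> {(set [(c, b), (c, \<not> b)] \<union> set [], {}), (set [(c, b), (c, \<not> b)], set []),
                         (set [], set [(c, b), (c, \<not> b)]), ({}, set [(c, b), (c, \<not> b)] \<union> set [])}"
      using lk_smooth_insert_blocks[OF dD dD' w0 w0' _ _ pass] by blast
    from AB have "A = {} \<or> B = {}" by auto
    with lk show ?thesis by (auto simp: arc_lk_empty)
  qed
  have "lk_smooth D' c = 0"
  proof -
    have "rotate n (fst D') = [] @ (c, b) # [] @ (c, \<not> b) # ?w" using w' by simp
    from lk_smooth_cut[OF dD' this] show ?thesis by (simp add: arc_lk_empty)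
  qed
  moreover have "crossings D \<subseteq> crossings D'" "crossings D' - crossings D = {c}" using cr c by auto
  ultimately show ?thesis using H_change[OF kd kd' _ ag, of "{}"] fixed by simp
qed

text \<open>The linking contributed by the two blocks of an RII move, each lying on one side:
  only the arrangement "over-passages on the first component, under-passages on the
  second" contributes, and then s(c) + s(d) = 0.\<close>
lemma arc_lk_RII_blocks:
  assumes cd: "c \<noteq> d" and sg: "s d = - s c" and E2: "set E2 = {(c, False), (d, False)}"
    and AB: "(A, B) \<in> {(set [(c, True), (d, True)] \<union> set E2, {}), (set [(c, True), (d, True)], set E2),
                      (set E2, set [(c, True), (d, True)]), ({}, set [(c, True), (d, True)] \<union> set E2)}"
  shows "arc_lk A B s = 0"
proof -
  define Over Under where "Over = {(c, True), (d, True)}" and "Under = {(c, False), (d, False)}"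
  from AB consider "A = Over \<union> Under" "B = {}" | "A = Over" "B = Under" | "A = Under" "B = Over" | "A = {}" "B = Over \<union> Under"
    unfolding E2 Over_def Under_def by auto
  then show ?thesis
  proof cases
    case 2
    have "arc_lk Over Under s = (\<Sum>z\<in>{c, d}. if (z, True) \<in> Over \<and> (z, False) \<in> Under then s z else 0)"
      by (rule arc_lk_within) (auto simp: Over_def Under_def)
    also have "\<dots> = s c + s d" using cd by (simp add: Over_def Under_def)
    finally show ?thesis using 2 sg by simp
  next
    case 3
    have "{b. (b, True) \<in> Under \<and> (b, False) \<in> Over} = {}" by (auto simp: Over_def Under_def)
    then show ?thesis unfolding 3 arc_lk_def by (simp only: sum.empty)
  qed (simp_all add: arc_lk_empty)
qed

text \<open>Both kinds of RII move (E2 lists the two new under-passages in either order): the two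
  new over-passages form one block and the two under-passages another, so the new
  crossings c, d contribute to an old linking number together or not at all, and their
  signs cancel.\<close>
lemma RII_H_change:
  assumes kd: "knot_diagram D" and kd': "knot_diagram D'"
    and cd: "c \<noteq> d" "c \<notin> crossings D" "d \<notin> crossings D"
    and w: "rotate m (fst D) = u @ v" and w': "rotate n (fst D') = (c, True) # (d, True) # u @ E2 @ v"
    and E2: "set E2 = {(c, False), (d, False)}" and sg: "snd D' d = - snd D' c"
    and ag: "agree_on_old D D'"
  shows "H D' - H D = - (snd D' c * lk_smooth D' c + snd D' d * lk_smooth D' d)"
proof -
  have dD: "distinct (fst D)" and dD': "distinct (fst D')" using kd kd' by (auto simp: knot_diagram_def)
  have crD: "crossings D = fst ` set (u @ v)" using crossings_rotate[of D m] w by simp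
  have "crossings D' = fst ` set ((c, True) # (d, True) # u @ E2 @ v)"
    unfolding crossings_rotate[of D' n] w' ..
  then have crD': "crossings D' = insert c (insert d (crossings D))" using crD E2 by auto
  let ?E1 = "[(c, True), (d, True)]"
  have fixed: "lk_smooth D' x = lk_smooth D x" if x: "x \<in> crossings D" for x
  proof -
    have w0': "rotate n (fst D') = ?E1 @ u @ E2 @ v" using w' by simp
    have "(x, True) \<in> set (rotate m (fst D))" "(x, False) \<in> set (rotate m (fst D))"
      using knot_diagram_passages[OF kd x] by simp_all
    then have pass: "(x, True) \<in> set (u @ v)" "(x, False) \<in> set (u @ v)" unfolding w .
    have "\<forall>p \<in> set ?E1 \<union> set E2. fst p \<notin> fst ` set (u @ v)" using cd E2 crD by auto
    moreover have "\<forall>y \<in> fst ` set (u @ v). snd D' y = snd D y"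
      using ag crD by (simp add: agree_on_old_def)
    ultimately obtain A B where "lk_smooth D' x = lk_smooth D x + arc_lk A B (snd D')"
      and "(A, B) \<in> {(set ?E1 \<union> set E2, {}), (set ?E1, set E2), (set E2, set ?E1), ({}, set ?E1 \<union> set E2)}"
      using lk_smooth_insert_blocks[OF dD dD' w w0' _ _ pass] by blast
    then show ?thesis using arc_lk_RII_blocks[OF cd(1) sg E2, of A B] by simp
  qed
  have "crossings D \<subseteq> crossings D'" "crossings D' - crossings D = {c, d}" using crD' cd by auto
  then show ?thesis using H_change[OF kd kd' _ ag, of "{}"] fixed cd(1) by simp
qed

text \<open>In a matched RII move the crossing c sees neither new passage of d as linking, while d
  sees c: their linking numbers are L and L + s(c), giving a change of s(c)^2 = 1.\<close>
lemma RII_matched_case: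
  assumes kd: "knot_diagram D" and kd': "knot_diagram D'" and mv: "RII_matched_move D D'"
  shows "H D' = H D + 1"
proof -
  obtain m n c d u v where cd: "c \<noteq> d" "c \<notin> crossings D" "d \<notin> crossings D"
    and w: "rotate m (fst D) = u @ v"
    and w': "rotate n (fst D') = (c, True) # (d, True) # u @ [(c, False), (d, False)] @ v"
    and sg: "snd D' d = - snd D' c" and ag: "agree_on_old D D'"
    using mv unfolding RII_matched_move_def by blast
  have dH: "H D' - H D = - (snd D' c * lk_smooth D' c + snd D' d * lk_smooth D' d)"
    using RII_H_change[OF kd kd' cd w w' _ sg ag] by simp
  have dD': "distinct (fst D')" using kd' by (simp add: knot_diagram_def)
  have old: "\<forall>p\<in>set v \<union> set u. fst p \<notin> {c, d}"
    using cd crossings_rotate[of D m] w by auto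
  let ?L = "arc_lk (set v) (set u) (snd D')"
  have "rotate n (fst D') = [] @ (c, True) # ((d, True) # u) @ (c, \<not> True) # ((d, False) # v)"
    using w' by simp
  from lk_smooth_cut[OF dD' this]
  have "lk_smooth D' c = arc_lk (set v \<union> {(d, False)}) (set u \<union> {(d, True)}) (snd D')" by simp
  also have "\<dots> = ?L + arc_lk {(d, False)} {(d, True)} (snd D')"
    using old by (intro arc_lk_union[where K = "{c, d}"]) auto
  finally have lk_c: "lk_smooth D' c = ?L" by (simp add: arc_lk_def)
  have "rotate n (fst D') = [(c, True)] @ (d, True) # (u @ [(c, False)]) @ (d, \<not> True) # v"
    using w' by simp
  from lk_smooth_cut[OF dD' this]
  have "lk_smooth D' d = arc_lk (set v \<union> {(c, True)}) (set u \<union> {(c, False)}) (snd D')" by simp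
  also have "\<dots> = ?L + arc_lk {(c, True)} {(c, False)} (snd D')"
    using old by (intro arc_lk_union[where K = "{c, d}"]) auto
  finally have lk_d: "lk_smooth D' d = ?L + snd D' c" by (simp add: arc_lk_def)
  have "c \<in> crossings D'" using crossings_rotate[of D' n] w' by force
  then have "snd D' c * snd D' c = 1" using knot_diagram_signs[OF kd'] by auto
  then show ?thesis using dH lk_c lk_d sg by (simp add: algebra_simps)
qed

text \<open>In an unmatched RII move neither new crossing sees the other: both linking numbers
  equal L and the contributions cancel.\<close>
lemma RII_unmatched_case:
  assumes kd: "knot_diagram D" and kd': "knot_diagram D'" and mv: "RII_unmatched_move D D'"
  shows "H D' = H D"
proof -
  obtain m n c d u v where cd: "c \<noteq> d" "c \<notin> crossings D" "d \<notin> crossings D"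
    and w: "rotate m (fst D) = u @ v"
    and w': "rotate n (fst D') = (c, True) # (d, True) # u @ [(d, False), (c, False)] @ v"
    and sg: "snd D' d = - snd D' c" and ag: "agree_on_old D D'"
    using mv unfolding RII_unmatched_move_def by blast
  have dH: "H D' - H D = - (snd D' c * lk_smooth D' c + snd D' d * lk_smooth D' d)"
    using RII_H_change[OF kd kd' cd w w' _ sg ag] by (simp add: insert_commute)
  have dD': "distinct (fst D')" using kd' by (simp add: knot_diagram_def)
  have old: "\<forall>p\<in>set v \<union> set u. fst p \<notin> {c, d}"
    using cd crossings_rotate[of D m] w by auto
  let ?L = "arc_lk (set v) (set u) (snd D')"
  have "rotate n (fst D') = [] @ (c, True) # ((d, True) # u @ [(d, False)]) @ (c, \<not> True) # v"
    using w' by simp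
  from lk_smooth_cut[OF dD' this]
  have "lk_smooth D' c = arc_lk (set v \<union> {}) (set u \<union> {(d, True), (d, False)}) (snd D')"
    by (simp add: insert_commute)
  also have "\<dots> = ?L" using old by (subst arc_lk_union[where K = "{c, d}"]) (auto simp: arc_lk_empty)
  finally have lk_c: "lk_smooth D' c = ?L" .
  have "rotate n (fst D') = [(c, True)] @ (d, True) # u @ (d, \<not> True) # ((c, False) # v)"
    using w' by simp
  from lk_smooth_cut[OF dD' this]
  have "lk_smooth D' d = arc_lk (set v \<union> {(c, False), (c, True)}) (set u \<union> {}) (snd D')"
    by (simp add: insert_commute)
  also have "\<dots> = ?L" using old by (subst arc_lk_union[where K = "{c, d}"]) (auto simp: arc_lk_empty)
  finally have lk_d: "lk_smooth D' d = ?L" .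
  show ?thesis using dH lk_c lk_d sg by (simp add: algebra_simps)
qed

section \<open>Erasing the passages of some crossings\<close>

definition sub_link :: "('c \<Rightarrow> bool) \<Rightarrow> ('c \<times> bool) list \<times> ('c \<times> bool) list
    \<Rightarrow> ('c \<times> bool) list \<times> ('c \<times> bool) list" where
  "sub_link R L = (filter (\<lambda>p. R (fst p)) (fst L), filter (\<lambda>p. R (fst p)) (snd L))"

lemma sub_link_sub_link:
  assumes "\<And>z. R z \<Longrightarrow> R' z"
  shows "sub_link R (sub_link R' L) = sub_link R L"
  using assms by (auto simp: sub_link_def filter_filter intro!: filter_cong)

lemma link_lk_split:
  "link_lk L s = link_lk (sub_link R L) s + link_lk (sub_link (\<lambda>z. \<not> R z) L) s"
proof -
  have "set xs = set (filter (\<lambda>p. R (fst p)) xs) \<union> set (filter (\<lambda>p. \<not> R (fst p)) xs)" for xs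
    by auto
  then have "link_lk L s = arc_lk (set (fst (sub_link R L)) \<union> set (fst (sub_link (\<lambda>z. \<not> R z) L)))
                                  (set (snd (sub_link R L)) \<union> set (snd (sub_link (\<lambda>z. \<not> R z) L))) s"
    unfolding link_lk_arc_lk sub_link_def fst_conv snd_conv by metis
  also have "\<dots> = link_lk (sub_link R L) s + link_lk (sub_link (\<lambda>z. \<not> R z) L) s"
    unfolding link_lk_arc_lk
    by (rule arc_lk_union[where K = "{z. \<not> R z}"]) (auto simp: sub_link_def)
  finally show ?thesis .
qed

lemma link_lk_signs:
  assumes "\<forall>z\<in>fst ` set (fst L). s' z = s z"
  shows "link_lk L s' = link_lk L s"
  unfolding link_lk_arc_lk using assms by (intro arc_lk_signs) force

lemma smoothing_subset: "set (fst (smoothing w a)) \<union> set (snd (smoothing w a)) \<subseteq> set w"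
proof -
  have tl: "set (tl xs) \<subseteq> set xs" for xs :: "'b list" by (cases xs) auto
  have drop: "set (tl (dropWhile P xs)) \<subseteq> set xs" and take: "set (takeWhile P xs) \<subseteq> set xs"
    for P and xs :: "'b list"
    using tl[of "dropWhile P xs"] by (auto dest: set_dropWhileD set_takeWhileD)
  have "set (from_under w a) \<subseteq> set w"
    unfolding from_under_def set_append using drop[of _ w] take[of _ w] by (rule Un_least)
  then show ?thesis
    using drop[of "\<lambda>x. x \<noteq> (a, True)" "from_under w a"] take[of "\<lambda>x. x \<noteq> (a, True)" "from_under w a"]
    unfolding smoothing_from_under fst_conv snd_conv by blast
qed

lemma smoothing_filter:
  assumes d: "distinct w" and y: "(y, True) \<in> set w" "(y, False) \<in> set w" and R: "R y"
  shows "smoothing (filter (\<lambda>p. R (fst p)) w) y = sub_link R (smoothing w y)"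
proof -
  obtain U ov Xs V where w: "w = U @ (y, ov) # Xs @ (y, \<not> ov) # V"
    using cut_exists[OF y(2,1)] by blast
  let ?f = "filter (\<lambda>p. R (fst p))"
  have fw: "?f w = ?f U @ (y, ov) # ?f Xs @ (y, \<not> ov) # ?f V" using R by (simp add: w)
  have "distinct (?f U @ (y, ov) # ?f Xs @ (y, \<not> ov) # ?f V)"
    using distinct_filter[OF d, of "\<lambda>p. R (fst p)"] unfolding fw .
  then have "smoothing (?f w) y = (if ov then (?f V @ ?f U, ?f Xs) else (?f Xs, ?f V @ ?f U))"
    unfolding fw by (rule smoothing_cut)
  moreover have "smoothing w y = (if ov then (V @ U, Xs) else (Xs, V @ U))"
    using d unfolding w by (rule smoothing_cut)
  ultimately show ?thesis by (simp add: sub_link_def)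
qed

lemma lk_smooth_local_split:
  assumes d: "distinct (fst D)" and y: "(y, True) \<in> set (fst D)" "(y, False) \<in> set (fst D)"
    and K: "y \<in> K"
  shows "lk_smooth D y =
      link_lk (sub_link (\<lambda>z. z \<notin> K) (smoothing (filter (\<lambda>p. fst p \<notin> K \<or> fst p = y) (rotate k (fst D))) y)) (snd D)
    + link_lk (smoothing (filter (\<lambda>p. fst p \<in> K) (rotate k (fst D))) y) (snd D)"
proof -
  let ?w = "rotate k (fst D)"
  have dw: "distinct ?w" using d by simp
  have yw: "(y, True) \<in> set ?w" "(y, False) \<in> set ?w" using y by simp_all
  have "lk_smooth D y = link_lk (smoothing ?w y) (snd D)"
    unfolding lk_smooth_def using smoothing_rotate[OF d y(2)] by simp
  also have "\<dots> = link_lk (sub_link (\<lambda>z. z \<notin> K) (smoothing ?w y)) (snd D)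
                  + link_lk (sub_link (\<lambda>z. z \<in> K) (smoothing ?w y)) (snd D)"
    using link_lk_split[of "smoothing ?w y" "snd D" "\<lambda>z. z \<notin> K"] by simp
  also have "sub_link (\<lambda>z. z \<notin> K) (smoothing ?w y)
      = sub_link (\<lambda>z. z \<notin> K) (sub_link (\<lambda>z. z \<notin> K \<or> z = y) (smoothing ?w y))"
    by (rule sub_link_sub_link[symmetric]) simp
  also have "sub_link (\<lambda>z. z \<notin> K \<or> z = y) (smoothing ?w y)
      = smoothing (filter (\<lambda>p. fst p \<notin> K \<or> fst p = y) ?w) y"
    using smoothing_filter[OF dw yw, of "\<lambda>z. z \<notin> K \<or> z = y"] by simp
  also have "sub_link (\<lambda>z. z \<in> K) (smoothing ?w y) = smoothing (filter (\<lambda>p. fst p \<in> K) ?w) y"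
    using smoothing_filter[OF dw yw, of "\<lambda>z. z \<in> K"] K by simp
  finally show ?thesis .
qed

section \<open>The RIII move\<close>

lemma P_sets:
  "set (P1 a b c h1 h2 h3 f) = {(c, h1 > h3), (a, h1 > h2)}"
  "set (P2 a b c h1 h2 h3 f) = {(a, h2 > h1), (b, h2 > h3)}"
  "set (P3 a b c h1 h2 h3 f) = {(b, h3 > h2), (c, h3 > h1)}"
  by (auto simp: P1_def P2_def P3_def)

definition triangle_word :: "'c \<Rightarrow> 'c \<Rightarrow> 'c \<Rightarrow> nat \<Rightarrow> nat \<Rightarrow> nat \<Rightarrow> bool \<Rightarrow> bool \<Rightarrow> bool
    \<Rightarrow> ('c \<times> bool) list" where
  "triangle_word a b c h1 h2 h3 f1 f2 f3 =
     P1 a b c h1 h2 h3 f1 @ P2 a b c h1 h2 h3 f2 @ P3 a b c h1 h2 h3 f3"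

lemma RIII_blocks:
  assumes dD: "distinct (fst D)"
    and w: "rotate m (fst D) = P1 a b c h1 h2 h3 f1 @ A @ P2 a b c h1 h2 h3 f2 @ B @ P3 a b c h1 h2 h3 f3 @ C"
    and w': "rotate n (fst D') = P1 a b c h1 h2 h3 (\<not> f1) @ A @ P2 a b c h1 h2 h3 (\<not> f2) @ B
                                 @ P3 a b c h1 h2 h3 (\<not> f3) @ C"
    and dh: "distinct [h1, h2, h3]"
  shows "\<forall>p\<in>set A \<union> set B \<union> set C. fst p \<notin> {a, b, c}"
    and "crossings D' = crossings D" and "{a, b, c} \<subseteq> crossings D"
proof -
  have dw: "distinct (P1 a b c h1 h2 h3 f1 @ A @ P2 a b c h1 h2 h3 f2 @ B @ P3 a b c h1 h2 h3 f3 @ C)"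
    using dD w by (metis distinct_rotate)
  have in_blocks: "p \<in> set (P1 a b c h1 h2 h3 f1) \<union> set (P2 a b c h1 h2 h3 f2) \<union> set (P3 a b c h1 h2 h3 f3)"
    if "fst p \<in> {a, b, c}" for p
    using that dh by (cases p; cases "snd p") (auto simp: P_sets)
  show "\<forall>p\<in>set A \<union> set B \<union> set C. fst p \<notin> {a, b, c}"
  proof (intro ballI notI)
    fix p assume "p \<in> set A \<union> set B \<union> set C" "fst p \<in> {a, b, c}"
    with in_blocks[of p] dw show False by auto
  qed
  show "crossings D' = crossings D"
    unfolding crossings_rotate[of D m] crossings_rotate[of D' n] w w' by (simp add: P_sets)
  show "{a, b, c} \<subseteq> crossings D"
    unfolding crossings_rotate[of D m] w by (force simp: P_sets)
qed

text \<open>Old crossings in an RIII move: the move only reorders the two passages inside each of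
  the three blocks of the triangle, which never changes the sides of a cut at another
  crossing.\<close>
lemma RIII_old_crossing:
  assumes dD: "distinct (fst D)" and dD': "distinct (fst D')"
    and w: "rotate m (fst D) = P1 a b c h1 h2 h3 f1 @ A @ P2 a b c h1 h2 h3 f2 @ B @ P3 a b c h1 h2 h3 f3 @ C"
    and w': "rotate n (fst D') = P1 a b c h1 h2 h3 (\<not> f1) @ A @ P2 a b c h1 h2 h3 (\<not> f2) @ B
                                 @ P3 a b c h1 h2 h3 (\<not> f3) @ C"
    and x: "(x, True) \<in> set (fst D)" "(x, False) \<in> set (fst D)" "x \<notin> {a, b, c}"
    and signs: "\<forall>z\<in>crossings D. snd D' z = snd D z"
  shows "lk_smooth D' x = lk_smooth D x"
proof -
  let ?p1 = "P1 a b c h1 h2 h3" and ?p2 = "P2 a b c h1 h2 h3" and ?p3 = "P3 a b c h1 h2 h3"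
  have xw: "(x, False) \<in> set (rotate m (fst D))" "(x, True) \<in> set (rotate m (fst D))"
    using x by simp_all
  obtain U ov Xs V where cut: "rotate m (fst D) = U @ (x, ov) # Xs @ (x, \<not> ov) # V"
    using cut_exists[OF xw] by blast
  have avoid: "\<forall>t. (x, t) \<notin> set (?p1 g)" "\<forall>t. (x, t) \<notin> set (?p2 g)" "\<forall>t. (x, t) \<notin> set (?p3 g)" for g
    using x(3) by (auto simp: P_sets)
  have same: "set (?p1 (\<not> f1)) = set (?p1 f1)" "set (?p2 (\<not> f2)) = set (?p2 f2)"
    "set (?p3 (\<not> f3)) = set (?p3 f3)"
    by (simp_all add: P_sets)
  have "[] @ ?p1 f1 @ (A @ ?p2 f2 @ B @ ?p3 f3 @ C) = U @ (x, ov) # Xs @ (x, \<not> ov) # V"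
    using w cut by simp
  from block_permute[OF this avoid(1) same(1)] obtain U1 Xs1 V1 where
    cut1: "(?p1 (\<not> f1) @ A) @ ?p2 f2 @ (B @ ?p3 f3 @ C) = U1 @ (x, ov) # Xs1 @ (x, \<not> ov) # V1"
    and s1: "set V1 \<union> set U1 = set V \<union> set U" "set Xs1 = set Xs" by auto
  from block_permute[OF cut1 avoid(2) same(2)] obtain U2 Xs2 V2 where
    cut2: "(?p1 (\<not> f1) @ A @ ?p2 (\<not> f2) @ B) @ ?p3 f3 @ C = U2 @ (x, ov) # Xs2 @ (x, \<not> ov) # V2"
    and s2: "set V2 \<union> set U2 = set V1 \<union> set U1" "set Xs2 = set Xs1" by auto
  from block_permute[OF cut2 avoid(3) same(3)] obtain U3 Xs3 V3 where
    cut3: "(?p1 (\<not> f1) @ A @ ?p2 (\<not> f2) @ B) @ ?p3 (\<not> f3) @ C = U3 @ (x, ov) # Xs3 @ (x, \<not> ov) # V3"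
    and s3: "set V3 \<union> set U3 = set V2 \<union> set U2" "set Xs3 = set Xs2" by blast
  have "rotate n (fst D') = U3 @ (x, ov) # Xs3 @ (x, \<not> ov) # V3" using w' cut3 by simp
  from lk_smooth_cut[OF dD' this] s1 s2 s3
  have "lk_smooth D' x = arc_lk (if ov then set V \<union> set U else set Xs)
                                (if ov then set Xs else set V \<union> set U) (snd D')" by simp
  also have "\<dots> = lk_smooth D x"
  proof (subst lk_smooth_cut[OF dD cut], rule arc_lk_signs)
    fix y assume "(y, True) \<in> (if ov then set V \<union> set U else set Xs)"
    then have "y \<in> fst ` set (rotate m (fst D))" unfolding cut by (force split: if_splits)
    then have "y \<in> crossings D" unfolding crossings_rotate[of D m] .
    then show "snd D' y = snd D y" using signs by blast
  qed
  finally show ?thesis .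
qed

text \<open>Crossings of the triangle: erasing the other two crossings of the triangle leaves the
  same word before and after the move, so only the internal part of the linking number,
  computed in the triangle word, changes.\<close>
lemma RIII_triangle_crossing:
  assumes dD: "distinct (fst D)" and dD': "distinct (fst D')"
    and w: "rotate m (fst D) = P1 a b c h1 h2 h3 f1 @ A @ P2 a b c h1 h2 h3 f2 @ B @ P3 a b c h1 h2 h3 f3 @ C"
    and w': "rotate n (fst D') = P1 a b c h1 h2 h3 (\<not> f1) @ A @ P2 a b c h1 h2 h3 (\<not> f2) @ B
                                 @ P3 a b c h1 h2 h3 (\<not> f3) @ C"
    and abc: "distinct [a, b, c]" and ext: "\<forall>p\<in>set A \<union> set B \<union> set C. fst p \<notin> {a, b, c}"
    and cr: "crossings D' = crossings D" and signs: "\<forall>z\<in>crossings D. snd D' z = snd D z"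
    and y: "y \<in> {a, b, c}" "(y, True) \<in> set (fst D)" "(y, False) \<in> set (fst D)"
  shows "lk_smooth D' y - lk_smooth D y =
      link_lk (smoothing (triangle_word a b c h1 h2 h3 (\<not> f1) (\<not> f2) (\<not> f3)) y) (snd D)
    - link_lk (smoothing (triangle_word a b c h1 h2 h3 f1 f2 f3) y) (snd D)"
proof -
  let ?K = "{a, b, c}"
  let ?ext = "\<lambda>p. fst p \<notin> ?K \<or> fst p = y" and ?int = "\<lambda>p. fst p \<in> ?K"
  have "set (rotate n (fst D')) = set (rotate m (fst D))" unfolding w w' by (simp add: P_sets)
  then have y': "(y, True) \<in> set (fst D')" "(y, False) \<in> set (fst D')" using y(2,3) by simp_all
  have flip: "filter ?ext (P1 a b c h1 h2 h3 (\<not> g)) = filter ?ext (P1 a b c h1 h2 h3 g)"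
    "filter ?ext (P2 a b c h1 h2 h3 (\<not> g)) = filter ?ext (P2 a b c h1 h2 h3 g)"
    "filter ?ext (P3 a b c h1 h2 h3 (\<not> g)) = filter ?ext (P3 a b c h1 h2 h3 g)" for g
    using abc y(1) by (cases g; auto simp: P1_def P2_def P3_def)+
  have same_ext: "filter ?ext (rotate n (fst D')) = filter ?ext (rotate m (fst D))"
    unfolding w w' filter_append flip ..
  have "filter ?int (A @ B @ C) = []" using ext by (auto simp: filter_empty_conv)
  then have tri: "filter ?int (rotate m (fst D)) = triangle_word a b c h1 h2 h3 f1 f2 f3"
    "filter ?int (rotate n (fst D')) = triangle_word a b c h1 h2 h3 (\<not> f1) (\<not> f2) (\<not> f3)"
    unfolding w w' triangle_word_def by (auto simp: P1_def P2_def P3_def)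
  have D'_signs: "link_lk (sub_link R (smoothing W y)) (snd D') = link_lk (sub_link R (smoothing W y)) (snd D)"
    if "set W \<subseteq> set (rotate n (fst D'))" for R W
  proof (rule link_lk_signs, intro ballI)
    fix z assume "z \<in> fst ` set (fst (sub_link R (smoothing W y)))"
    then have "z \<in> fst ` set (rotate n (fst D'))"
      using smoothing_subset[of W y] that by (auto simp: sub_link_def)
    then have "z \<in> crossings D" using cr unfolding crossings_rotate[of D' n] by simp
    then show "snd D' z = snd D z" using signs by blast
  qed
  have ext_part: "link_lk (sub_link (\<lambda>z. z \<notin> ?K) (smoothing (filter ?ext (rotate n (fst D'))) y)) (snd D')
      = link_lk (sub_link (\<lambda>z. z \<notin> ?K) (smoothing (filter ?ext (rotate m (fst D))) y)) (snd D)"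
    unfolding same_ext[symmetric] by (rule D'_signs) auto
  have int_part: "link_lk (smoothing (filter ?int (rotate n (fst D'))) y) (snd D')
      = link_lk (smoothing (filter ?int (rotate n (fst D'))) y) (snd D)"
    using D'_signs[of "filter ?int (rotate n (fst D'))" "\<lambda>_. True"] by (simp add: sub_link_def)
  show ?thesis
    using lk_smooth_local_split[OF dD y(2,3) y(1), of m] lk_smooth_local_split[OF dD' y' y(1), of n]
      ext_part int_part tri by simp
qed

text \<open>The finite computation on the six-letter triangle word: with the crossing signs of an
  RIII configuration, the signed change of the internal linking numbers is minus Arnold's
  sign (-1)^q of the newborn triangle.\<close>
lemma triangle_change:
  fixes a b c :: 'c and h1 h2 h3 :: nat and s :: "'c \<Rightarrow> int"
  assumes d: "distinct [a, b, c]" "distinct [h1, h2, h3]" and mu: "mu \<in> {1, -1}"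
    and sa: "s a = mu * dlt f1 * dlt f2 * psgn h1 h2"
    and sb: "s b = mu * dlt f2 * dlt f3 * psgn h2 h3"
    and sc: "s c = mu * dlt f3 * dlt f1 * psgn h3 h1"
  shows "(\<Sum>y\<in>{a, b, c}. s y * (link_lk (smoothing (triangle_word a b c h1 h2 h3 (\<not> f1) (\<not> f2) (\<not> f3)) y) s
                                - link_lk (smoothing (triangle_word a b c h1 h2 h3 f1 f2 f3) y) s))
       = - ((-1) ^ card {k \<in> {1::nat, 2, 3}. \<not> [f1, f2, f3] ! (k - 1)})"
proof -
  have ne: "a \<noteq> b" "a \<noteq> c" "b \<noteq> c" "b \<noteq> a" "c \<noteq> a" "c \<noteq> b" "h1 \<noteq> h2" "h1 \<noteq> h3" "h2 \<noteq> h3"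
    using d by auto
  have three: "(\<Sum>z\<in>{a, b, c}. g z) = g a + g b + g c" for g :: "'c \<Rightarrow> int" using ne by simp
  have lk: "link_lk (smoothing (triangle_word a b c h1 h2 h3 g1 g2 g3) y) s =
    (\<Sum>z\<in>{a, b, c}. if (z, True) \<in> set (fst (smoothing (triangle_word a b c h1 h2 h3 g1 g2 g3) y))
       \<and> (z, False) \<in> set (snd (smoothing (triangle_word a b c h1 h2 h3 g1 g2 g3) y)) then s z else 0)"
    for g1 g2 g3 y
  proof -
    have "\<forall>p\<in>set (triangle_word a b c h1 h2 h3 g1 g2 g3). fst p \<in> {a, b, c}"
      by (auto simp: triangle_word_def P1_def P2_def P3_def)
    then have "\<forall>p\<in>set (fst (smoothing (triangle_word a b c h1 h2 h3 g1 g2 g3) y))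
        \<union> set (snd (smoothing (triangle_word a b c h1 h2 h3 g1 g2 g3) y)). fst p \<in> {a, b, c}"
      using smoothing_subset[of "triangle_word a b c h1 h2 h3 g1 g2 g3" y] by blast
    then show ?thesis unfolding link_lk_arc_lk by (intro arc_lk_within) simp_all
  qed
  have q: "card {k \<in> {1::nat, 2, 3}. \<not> [f1, f2, f3] ! (k - 1)}
      = (if f1 then 0 else 1) + (if f2 then 0 else 1) + (if f3 then 0 else 1)"
  proof -
    have "{k \<in> {1::nat, 2, 3}. \<not> [f1, f2, f3] ! (k - 1)}
        = (if f1 then {} else {1}) \<union> (if f2 then {} else {2}) \<union> (if f3 then {} else {3})"
      by auto
    then show ?thesis by (cases f1; cases f2; cases f3) auto
  qed
  from mu have "mu = 1 \<or> mu = -1" by auto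
  then show ?thesis
    unfolding lk three q sa sb sc using ne
    by (elim disjE; cases f1; cases f2; cases f3; cases "h1 < h2"; cases "h2 < h3"; cases "h1 < h3")
       (simp_all add: triangle_word_def P1_def P2_def P3_def dlt_def psgn_def smoothing_def)
qed

lemma RIII_case:
  assumes kd: "knot_diagram D" and kd': "knot_diagram D'" and mv: "RIII_move D D' q"
  shows "H D' - H D \<in> {1, -1} \<and> H D' - H D = St_change q"
proof -
  obtain m n a b c h1 h2 h3 f1 f2 f3 A B C mu where
    abc: "distinct [a, b, c]" and dh: "distinct [h1, h2, h3]" and
    w: "rotate m (fst D) = P1 a b c h1 h2 h3 f1 @ A @ P2 a b c h1 h2 h3 f2 @ B @ P3 a b c h1 h2 h3 f3 @ C" and
    w': "rotate n (fst D') = P1 a b c h1 h2 h3 (\<not> f1) @ A @ P2 a b c h1 h2 h3 (\<not> f2) @ B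
                           @ P3 a b c h1 h2 h3 (\<not> f3) @ C" and
    mu: "mu \<in> {1, -1}" and
    sa: "snd D a = mu * dlt f1 * dlt f2 * psgn h1 h2" and
    sb: "snd D b = mu * dlt f2 * dlt f3 * psgn h2 h3" and
    sc: "snd D c = mu * dlt f3 * dlt f1 * psgn h3 h1" and
    ag: "agree_on_old D D'" and
    q: "q = card {k \<in> {1::nat, 2, 3}. \<not> [f1, f2, f3] ! (k - 1)}"
    using mv unfolding RIII_move_def by blast
  let ?K = "{a, b, c}"
  let ?T = "triangle_word a b c h1 h2 h3 f1 f2 f3"
    and ?T' = "triangle_word a b c h1 h2 h3 (\<not> f1) (\<not> f2) (\<not> f3)"
  have dD: "distinct (fst D)" and dD': "distinct (fst D')" using kd kd' by (auto simp: knot_diagram_def)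
  note blocks = RIII_blocks[OF dD w w' dh]
  note ext = blocks(1) and cr = blocks(2) and K = blocks(3)
  have signs: "\<forall>z\<in>crossings D. snd D' z = snd D z" using ag by (simp add: agree_on_old_def)
  have fixed: "lk_smooth D' x = lk_smooth D x" if x: "x \<in> crossings D - ?K" for x
  proof -
    have "x \<in> crossings D" "x \<notin> ?K" using x by simp_all
    with knot_diagram_passages[OF kd] show ?thesis by (intro RIII_old_crossing[OF dD dD' w w' _ _ _ signs]) auto
  qed
  have triangle: "lk_smooth D' y - lk_smooth D y =
      link_lk (smoothing ?T' y) (snd D) - link_lk (smoothing ?T y) (snd D)" if y: "y \<in> ?K" for y
  proof -
    have "y \<in> crossings D" using y K by blast
    with knot_diagram_passages[OF kd] show ?thesis
      by (intro RIII_triangle_crossing[OF dD dD' w w' abc ext cr signs y]) auto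
  qed
  have "H D' - H D = - (\<Sum>y\<in>?K. snd D y * (lk_smooth D' y - lk_smooth D y))"
    using H_change[OF kd kd' _ ag K fixed] cr by simp
  also have "\<dots> = - (\<Sum>y\<in>?K. snd D y * (link_lk (smoothing ?T' y) (snd D) - link_lk (smoothing ?T y) (snd D)))"
    by (intro arg_cong[where f = uminus] sum.cong refl) (simp add: triangle)
  also have "\<dots> = St_change q"
    using triangle_change[OF abc dh mu sa sb sc] by (simp add: St_change_def q)
  finally show ?thesis by (simp add: St_change_def minus_one_power_iff)
qed

theorem mainTheorem7:
  shows "(\<forall>D D' :: 'c diagram. knot_diagram D \<and> knot_diagram D' \<and> RI_move D D' \<longrightarrow> H D' = H D)
    \<and> (\<forall>D D' :: 'c diagram. knot_diagram D \<and> knot_diagram D' \<and> RII_unmatched_move D D' \<longrightarrow> H D' = H D)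
    \<and> (\<forall>D D' :: 'c diagram. knot_diagram D \<and> knot_diagram D' \<and> RII_matched_move D D' \<longrightarrow> H D' = H D + 1)
    \<and> (\<forall>(D :: 'c diagram) D' q. knot_diagram D \<and> knot_diagram D' \<and> RIII_move D D' q \<longrightarrow>
          H D' - H D \<in> {1, -1} \<and> H D' - H D = St_change q)"
  using RI_case RII_unmatched_case RII_matched_case RIII_case by blast

end
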